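(* Let $\mathbf C$ be the middle-third Cantor set, $s=\log_32$, $\mathcal R=\bigcup\{\mathbf C+k/3^n:k,n\in\mathbb Z\}$, and $\mathfrak H^s$ the $s$-dimensional Hausdorff measure restricted to $\mathcal R$. If $\varphi:\mathcal R\to\mathbb C$ is Borel measurable, has bounded support (i.e. $\{x\in\mathcal R:\varphi(x)\ne0\}$ is bounded), and satisfies $\varphi(x)=\varphi(3x)+\varphi(3x-2)$ for all $x\in\mathcal R$, then $\varphi$ is a constant multiple of $\chi_{\mathbf C}$ up to a set of $\mathfrak H^s$-measure zero. *)

theory Defs
  imports "HOL-Analysis.Analysis"
begin

definition cantor_set :: "real set" where
  "cantor_set = {x. \<exists>d::nat \<Rightarrow> real. (\<forall>i. d i \<in> {0, 2}) \<and> (\<lambda>i. d i / 3 ^ Suc i) sums x}"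

definition cantor_R :: "real set" where
  "cantor_R = (\<Union>k::int. \<Union>n::int. (\<lambda>x. x + of_int k / 3 powi n) ` cantor_set)"

text \<open>Hausdorff outer measure (Caratheodory construction, unnormalised),
  on subsets of the real line, with countable covers by bounded sets.\<close>
definition hausdorff_pre :: "real \<Rightarrow> real \<Rightarrow> real set \<Rightarrow> ennreal" where
  "hausdorff_pre s \<delta> A =
     (INF U \<in> {U :: nat \<Rightarrow> real set. A \<subseteq> (\<Union>i. U i) \<and> (\<forall>i. bounded (U i) \<and> diameter (U i) \<le> \<delta>)}.
        (\<Sum>i. ennreal (diameter (U i) powr s)))"

definition hausdorff_outer :: "real \<Rightarrow> real set \<Rightarrow> ennreal" where
  "hausdorff_outer s A = (SUP \<delta> \<in> {0<..}. hausdorff_pre s \<delta> A)"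

end

theory Submission
  imports Defs
begin

text \<open>
  Points of \<open>\<R>\<close> have the form \<open>(c + m) / 3\<^sup>n\<close> with \<open>c\<close> in the Cantor set \<open>C\<close>.
  Iterating the equation along the ternary digits of \<open>c\<close> and using the bounded support shows
  that \<open>\<phi>\<close> vanishes on \<open>C + k\<close> for \<open>|k| \<ge> 2\<close> and on \<open>C \<plusminus> 1\<close> off the endpoints, and that
  \<open>\<phi>\<close> is unchanged when a ternary digit is removed from \<open>c\<close>. Hence \<open>\<phi>((c + m) / 3\<^sup>n) =
  \<phi>(c) \<chi>\<^sub>C((c + m) / 3\<^sup>n)\<close> for \<open>c \<noteq> 0, 1\<close>, and it remains to see that \<open>\<phi>\<close> is
  \<open>\<H>\<^sup>s\<close>-almost everywhere constant on \<open>C\<close>. Pulling \<open>\<phi>\<close> back along the map that turns binary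
  digits \<open>b\<^sub>i\<close> into ternary digits \<open>2b\<^sub>i\<close> gives a Borel function on the reals invariant under
  \<open>y \<mapsto> 2y\<close> and \<open>y \<mapsto> y + 1\<close>; ergodicity of doubling modulo 1 makes it Lebesgue-almost
  everywhere constant. That map sends dyadic intervals of length \<open>2^(-n)\<close> to sets of diameter
  \<open>3^(-n) = (2^(-n))^(1/s)\<close>, so it maps Lebesgue-null sets to \<open>\<H>\<^sup>s\<close>-null sets, and it hits
  every point of \<open>C\<close> except countably many.
\<close>

section \<open>Ternary expansions and the Cantor set\<close>

definition ternary_value :: "(nat \<Rightarrow> real) \<Rightarrow> real" where
  "ternary_value d = (\<Sum>i. d i / 3 ^ Suc i)"

definition cantor_digits :: "(nat \<Rightarrow> real) \<Rightarrow> bool" where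
  "cantor_digits d \<longleftrightarrow> (\<forall>i. d i \<in> {0, 2})"

lemma sums_two_div_power3: "(\<lambda>i. 2 / 3 ^ Suc i :: real) sums 1"
proof -
  have "(\<lambda>i. (2/3) * (1/3::real) ^ i) sums ((2/3) * (1 / (1 - 1/3)))"
    by (intro sums_mult geometric_sums) auto
  then show ?thesis by (simp add: field_simps)
qed

lemma summable_cantor_digits:
  assumes "cantor_digits d" shows "summable (\<lambda>i. d i / 3 ^ Suc i)"
proof (rule summable_comparison_test'[OF sums_summable[OF sums_two_div_power3], of 0])
  fix i :: nat
  have "d i = 0 \<or> d i = 2" using assms by (auto simp: cantor_digits_def)
  then show "norm (d i / 3 ^ Suc i) \<le> 2 / 3 ^ Suc i" by auto
qed

lemma ternary_value_sums: "cantor_digits d \<Longrightarrow> (\<lambda>i. d i / 3 ^ Suc i) sums ternary_value d"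
  unfolding ternary_value_def by (rule summable_sums[OF summable_cantor_digits])

lemma cantor_set_eq: "cantor_set = ternary_value ` Collect cantor_digits"
proof (intro set_eqI iffI)
  fix x assume "x \<in> cantor_set"
  then obtain d where d: "cantor_digits d" "(\<lambda>i. d i / 3 ^ Suc i) sums x"
    by (auto simp: cantor_set_def cantor_digits_def)
  then show "x \<in> ternary_value ` Collect cantor_digits"
    using ternary_value_sums[OF d(1)] sums_unique2 by blast
next
  fix x assume "x \<in> ternary_value ` Collect cantor_digits"
  then show "x \<in> cantor_set"
    using ternary_value_sums unfolding cantor_set_def cantor_digits_def by blast
qed

lemma ternary_value_in_cantor_set: "cantor_digits d \<Longrightarrow> ternary_value d \<in> cantor_set"
  by (simp add: cantor_set_eq)

lemma ternary_value_bounds: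
  assumes d: "cantor_digits d" shows "0 \<le> ternary_value d \<and> ternary_value d \<le> 1"
proof -
  have le: "0 \<le> d i / 3 ^ Suc i \<and> d i / 3 ^ Suc i \<le> 2 / 3 ^ Suc i" for i
    using d[unfolded cantor_digits_def, rule_format, of i] by auto
  have "0 \<le> ternary_value d"
    unfolding ternary_value_def using le by (intro suminf_nonneg summable_cantor_digits d) auto
  moreover have "ternary_value d \<le> (\<Sum>i. 2 / 3 ^ Suc i)" unfolding ternary_value_def using le
    by (intro suminf_le summable_cantor_digits d sums_summable[OF sums_two_div_power3]) auto
  ultimately show ?thesis using sums_unique[OF sums_two_div_power3] by simp
qed

lemma cantor_set_subset: "cantor_set \<subseteq> {0..1}"
  using ternary_value_bounds by (auto simp: cantor_set_eq)

lemma cantor_digits_Suc: "cantor_digits d \<Longrightarrow> cantor_digits (\<lambda>i. d (Suc i))"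
  by (simp add: cantor_digits_def)

lemma ternary_value_Suc:
  assumes d: "cantor_digits d"
  shows "3 * ternary_value d = d 0 + ternary_value (\<lambda>i. d (Suc i))"
proof -
  have "(\<lambda>i. d (Suc i) / 3 ^ Suc i / 3) sums (ternary_value d - d 0 / 3)"
    using sums_split_initial_segment[OF ternary_value_sums[OF d], of 1] by simp
  moreover have "(\<lambda>i. d (Suc i) / 3 ^ Suc i / 3) sums (ternary_value (\<lambda>i. d (Suc i)) / 3)"
    by (intro sums_divide ternary_value_sums cantor_digits_Suc d)
  ultimately show ?thesis using sums_unique2 by fastforce
qed

lemma ternary_value_shift:
  assumes d: "cantor_digits d"
  shows "3 ^ n * ternary_value d = (\<Sum>i<n. d i * 3 ^ (n - 1 - i)) + ternary_value (\<lambda>i. d (i + n))"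
proof (induction n)
  case (Suc n)
  have "3 ^ Suc n * ternary_value d
      = 3 * (\<Sum>i<n. d i * 3 ^ (n - 1 - i)) + 3 * ternary_value (\<lambda>i. d (i + n))"
    using Suc by (simp add: algebra_simps)
  also have "3 * ternary_value (\<lambda>i. d (i + n)) = d n + ternary_value (\<lambda>i. d (i + Suc n))"
    using ternary_value_Suc[of "\<lambda>i. d (i + n)"] d by (simp add: cantor_digits_def)
  also have "3 * (\<Sum>i<n. d i * 3 ^ (n - 1 - i)) = (\<Sum>i<n. d i * 3 ^ (Suc n - 1 - i))"
    unfolding sum_distrib_left
    by (rule sum.cong) (auto simp: Suc_diff_Suc power_Suc[symmetric] simp del: power_Suc)
  finally show ?case by simp
qed simp

lemma ternary_value_shift_int:
  assumes d: "cantor_digits d"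
  obtains j :: int where "3 ^ n * ternary_value d = of_int j + ternary_value (\<lambda>i. d (i + n))"
proof -
  have "d i \<in> \<int>" for i using d unfolding cantor_digits_def by (cases "d i = 0") auto
  then have "(\<Sum>i<n. d i * 3 ^ (n - 1 - i)) \<in> \<int>" by (intro Ints_sum Ints_mult Ints_power) auto
  then show ?thesis using that ternary_value_shift[OF d, of n] by (metis Ints_cases)
qed

lemma cantor_set_mult3_iff: "x \<in> cantor_set \<longleftrightarrow> 3 * x \<in> cantor_set \<or> 3 * x - 2 \<in> cantor_set"
proof
  assume "x \<in> cantor_set"
  then obtain d where d: "cantor_digits d" "x = ternary_value d" by (auto simp: cantor_set_eq)
  have "d 0 = 0 \<or> d 0 = 2" using d by (auto simp: cantor_digits_def)
  moreover have "ternary_value (\<lambda>i. d (Suc i)) \<in> cantor_set"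
    by (intro ternary_value_in_cantor_set cantor_digits_Suc d)
  ultimately show "3 * x \<in> cantor_set \<or> 3 * x - 2 \<in> cantor_set"
    using ternary_value_Suc[OF d(1)] d(2) by auto
next
  have digit: "(a + c) / 3 \<in> cantor_set" if a: "a \<in> {0, 2}" and c: "c \<in> cantor_set" for a c
  proof -
    obtain d where d: "cantor_digits d" "c = ternary_value d" using c by (auto simp: cantor_set_eq)
    then have "cantor_digits (case_nat a d)" using a by (auto simp: cantor_digits_def split: nat.split)
    moreover have "3 * ternary_value (case_nat a d) = a + c"
      using ternary_value_Suc[OF calculation] d by simp
    then have "(a + c) / 3 = ternary_value (case_nat a d)" by simp
    with \<open>cantor_digits (case_nat a d)\<close> show ?thesis by (simp add: ternary_value_in_cantor_set)
  qed
  assume "3 * x \<in> cantor_set \<or> 3 * x - 2 \<in> cantor_set"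
  then show "x \<in> cantor_set" using digit[of 0 "3 * x"] digit[of 2 "3 * x - 2"] by auto
qed

lemma indicator_cantor_set_mult3:
  "(indicator cantor_set x :: 'a::semiring_1) = indicator cantor_set (3 * x) + indicator cantor_set (3 * x - 2)"
proof -
  have "\<not> (3 * x \<in> cantor_set \<and> 3 * x - 2 \<in> cantor_set)" using cantor_set_subset[THEN subsetD, of "3 * x"] cantor_set_subset[THEN subsetD, of "3 * x - 2"] by auto
  then show ?thesis using cantor_set_mult3_iff[of x] by (auto simp: indicator_def)
qed

lemma cantor_set_div3: "c \<in> cantor_set \<Longrightarrow> c / 3 \<in> cantor_set"
  by (subst cantor_set_mult3_iff) simp

lemma cantor_set_mult_power3: "c \<in> cantor_set \<Longrightarrow> \<exists>j::int. 3 ^ n * c - of_int j \<in> cantor_set"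
proof (induction n)
  case (Suc n)
  then obtain j :: int where "3 ^ n * c - of_int j \<in> cantor_set" by blast
  then have "3 ^ Suc n * c - of_int (3 * j) \<in> cantor_set \<or> 3 ^ Suc n * c - of_int (3 * j + 2) \<in> cantor_set"
    by (subst (asm) cantor_set_mult3_iff) (simp add: algebra_simps)
  then show ?case by blast
qed (auto intro!: exI[of _ 0])

lemma cantor_set_reflect: assumes "c \<in> cantor_set" shows "1 - c \<in> cantor_set"
proof -
  obtain d where d: "cantor_digits d" "c = ternary_value d" using assms by (auto simp: cantor_set_eq)
  have "(\<lambda>i. 2 / 3 ^ Suc i - d i / 3 ^ Suc i) sums (1 - c)"
    using sums_diff[OF sums_two_div_power3 ternary_value_sums[OF d(1)]] d(2) by simp
  then have "(\<lambda>i. (2 - d i) / 3 ^ Suc i) sums (1 - c)" by (simp add: diff_divide_distrib)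
  moreover have "2 - d i \<in> {0, 2}" for i
    using d(1)[unfolded cantor_digits_def, rule_format, of i] by auto
  ultimately show ?thesis unfolding cantor_set_def by (intro CollectI exI[of _ "\<lambda>i. 2 - d i"]) simp
qed

lemma cantor_set_div_power3: "c \<in> cantor_set \<Longrightarrow> c / 3 ^ n \<in> cantor_set"
  by (induction n) (auto dest: cantor_set_div3 simp: field_simps)

lemma cantor_R_iff:
  "x \<in> cantor_R \<longleftrightarrow> (\<exists>n::nat. \<exists>m::int. \<exists>c\<in>cantor_set. x = (c + of_int m) / 3 ^ n)"
proof
  assume "x \<in> cantor_R"
  then obtain k i c where c: "c \<in> cantor_set" and x: "x = c + of_int k / 3 powi i"
    by (auto simp: cantor_R_def)
  show "\<exists>n::nat. \<exists>m::int. \<exists>c\<in>cantor_set. x = (c + of_int m) / 3 ^ n"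
  proof (cases "i \<ge> 0")
    case True
    obtain j :: int where j: "3 ^ nat i * c - of_int j \<in> cantor_set"
      using cantor_set_mult_power3[OF c] by blast
    have "x = ((3 ^ nat i * c - of_int j) + of_int (j + k)) / 3 ^ nat i"
      using True x by (simp add: power_int_def field_simps)
    then show ?thesis using j by blast
  next
    case False
    then have "x = (c + of_int (k * 3 ^ nat (- i))) / 3 ^ 0"
      using x by (simp add: power_int_def field_simps)
    then show ?thesis using c by blast
  qed
next
  assume "\<exists>n::nat. \<exists>m::int. \<exists>c\<in>cantor_set. x = (c + of_int m) / 3 ^ n"
  then obtain n m c where c: "c \<in> cantor_set" and x: "x = (c + of_int m) / 3 ^ n" by blast
  have "x = c / 3 ^ n + of_int m / 3 powi (int n)" using x by (simp add: add_divide_distrib)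
  then show "x \<in> cantor_R" unfolding cantor_R_def using cantor_set_div_power3[OF c] by blast
qed

lemma cantor_set_plus_int_in_R: "c \<in> cantor_set \<Longrightarrow> c + of_int k \<in> cantor_R"
  by (auto simp: cantor_R_iff intro!: exI[of _ 0] exI[of _ k])

lemma cantor_R_reflect: assumes "x \<in> cantor_R" shows "1 - x \<in> cantor_R"
proof -
  obtain n m c where c: "c \<in> cantor_set" and x: "x = (c + of_int m) / 3 ^ n"
    using assms by (auto simp: cantor_R_iff)
  have "1 - x = ((1 - c) + of_int (3 ^ n - 1 - m)) / 3 ^ n" using x by (simp add: field_simps)
  then show ?thesis using cantor_set_reflect[OF c] unfolding cantor_R_iff by blast
qed

section \<open>The refinement equation\<close>

locale cantor_refinable =
  fixes \<phi> :: "real \<Rightarrow> complex"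
  assumes refinement_eq: "\<And>x. x \<in> cantor_R \<Longrightarrow> \<phi> x = \<phi> (3 * x) + \<phi> (3 * x - 2)"
    and bounded_support: "bounded {x \<in> cantor_R. \<phi> x \<noteq> 0}"
begin

text \<open>The reflected function satisfies the same hypotheses; this reduces statements about
  the left of the Cantor set to statements about its right.\<close>
lemma reflect: "cantor_refinable (\<lambda>x. \<phi> (1 - x))"
proof
  fix x assume "x \<in> cantor_R"
  then show "\<phi> (1 - x) = \<phi> (1 - 3 * x) + \<phi> (1 - (3 * x - 2))"
    using refinement_eq[OF cantor_R_reflect] by (simp add: algebra_simps)
next
  obtain B where B: "\<And>x. x \<in> {x \<in> cantor_R. \<phi> x \<noteq> 0} \<Longrightarrow> norm x \<le> B"
    using bounded_support unfolding bounded_iff by blast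
  have "norm x \<le> 1 + B" if "x \<in> cantor_R" "\<phi> (1 - x) \<noteq> 0" for x
    using B[of "1 - x"] that cantor_R_reflect[of x] by auto
  then show "bounded {x \<in> cantor_R. \<phi> (1 - x) \<noteq> 0}" unfolding bounded_iff by blast
qed

lemma refinement_cantor_translate:
  assumes c: "c \<in> cantor_set"
  obtains a :: int where "a \<in> {0, 2}" "3 * c - of_int a \<in> cantor_set"
    "\<phi> (c + of_int k) = \<phi> ((3 * c - of_int a) + of_int (3 * k + a))
                       + \<phi> ((3 * c - of_int a) + of_int (3 * k + a - 2))"
proof -
  have eq: "\<phi> (c + of_int k) = \<phi> (3 * c + of_int (3 * k)) + \<phi> (3 * c + of_int (3 * k) - 2)"
    using refinement_eq[OF cantor_set_plus_int_in_R[OF c]] by (simp add: algebra_simps)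
  from c consider "3 * c \<in> cantor_set" | "3 * c - 2 \<in> cantor_set" using cantor_set_mult3_iff by blast
  then show ?thesis
  proof cases
    case 1
    with eq show ?thesis by (intro that[of 0]) (simp_all add: algebra_simps)
  next
    case 2
    with eq show ?thesis by (intro that[of 2]) (simp_all add: algebra_simps)
  qed
qed

text \<open>Each use of the equation replaces an offset \<open>k \<ge> 2\<close> by offsets \<open>\<ge> k + 2\<close>, so the
  points eventually leave the bounded support.\<close>
lemma vanishes_far_right:
  assumes "c \<in> cantor_set" "2 \<le> k"
  shows "\<phi> (c + of_int k) = 0"
proof -
  obtain B where B: "\<And>x. x \<in> {x \<in> cantor_R. \<phi> x \<noteq> 0} \<Longrightarrow> norm x \<le> B"
    using bounded_support unfolding bounded_iff by blast
  have far: "\<forall>c\<in>cantor_set. \<forall>k\<ge>2. B < of_int k + real n \<longrightarrow> \<phi> (c + of_int k) = 0" for n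
  proof (induction n)
    case 0
    show ?case
    proof (intro ballI allI impI)
      fix c k assume "c \<in> cantor_set" "2 \<le> k" "B < of_int k + real 0"
      then show "\<phi> (c + of_int k) = 0"
        using B[of "c + of_int k"] cantor_set_plus_int_in_R cantor_set_subset by force
    qed
  next
    case (Suc n)
    show ?case
    proof (intro ballI allI impI)
      fix c k assume c: "c \<in> cantor_set" and k: "2 \<le> k" "B < of_int k + real (Suc n)"
      obtain a :: int where a: "a \<in> {0, 2}" "3 * c - of_int a \<in> cantor_set"
        "\<phi> (c + of_int k) = \<phi> ((3 * c - of_int a) + of_int (3 * k + a))
                           + \<phi> ((3 * c - of_int a) + of_int (3 * k + a - 2))"
        using refinement_cantor_translate[OF c] .
      have "\<phi> ((3 * c - of_int a) + of_int j) = 0" if "j \<in> {3 * k + a, 3 * k + a - 2}" for j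
        by (intro Suc.IH[rule_format] a(2)) (use a(1) k that in auto)
      from this[of "3 * k + a"] this[of "3 * k + a - 2"] show "\<phi> (c + of_int k) = 0"
        using a(3) by simp
    qed
  qed
  obtain n :: nat where "B < real n" using reals_Archimedean2 by blast
  then have "B < of_int k + real n" using assms(2) by linarith
  with far[of n] assms show ?thesis by blast
qed

lemma vanishes_far:
  assumes c: "c \<in> cantor_set" and k: "2 \<le> \<bar>k\<bar>"
  shows "\<phi> (c + of_int k) = 0"
proof (cases "k \<ge> 2")
  case False
  then have "2 \<le> - k" using k by linarith
  then have "\<phi> (1 - ((1 - c) + of_int (- k))) = 0"
    using cantor_refinable.vanishes_far_right[OF reflect cantor_set_reflect[OF c]] by blast
  then show ?thesis by simp
qed (use vanishes_far_right[OF c] in blast)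

text \<open>Some ternary digit of \<open>c \<noteq> 0\<close> is 2, and at the first one the equation produces
  only far translates.\<close>
lemma vanishes_plus_one:
  assumes c: "c \<in> cantor_set" "c \<noteq> 0"
  shows "\<phi> (c + 1) = 0"
proof -
  have "\<forall>c\<in>cantor_set. (1/3) ^ n < c \<longrightarrow> \<phi> (c + of_int 1) = 0" for n
  proof (induction n)
    case (Suc n)
    show ?case
    proof (intro ballI impI)
      fix c assume c: "c \<in> cantor_set" "(1/3) ^ Suc n < c"
      obtain a :: int where a: "a \<in> {0, 2}" "3 * c - of_int a \<in> cantor_set"
        "\<phi> (c + of_int 1) = \<phi> ((3 * c - of_int a) + of_int (3 + a))
                           + \<phi> ((3 * c - of_int a) + of_int (3 + a - 2))"
        using refinement_cantor_translate[OF c(1), of 1] by auto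
      have far: "\<phi> ((3 * c - of_int a) + of_int (3 + a)) = 0"
        by (rule vanishes_far[OF a(2)]) (use a(1) in auto)
      show "\<phi> (c + of_int 1) = 0"
      proof (cases "a = 0")
        case True
        then have "\<phi> (3 * c + of_int 1) = 0" using Suc.IH a(2) c(2) by auto
        then show ?thesis using a(3) far True by simp
      next
        case False
        then show ?thesis using a vanishes_far[OF a(2), of 3] far by auto
      qed
    qed
  qed (use cantor_set_subset in auto)
  moreover obtain n where "(1/3) ^ n < c"
    using real_arch_pow_inv[of c "1/3"] c cantor_set_subset by force
  ultimately show ?thesis using c(1) by simp
qed

lemma vanishes_minus_one:
  assumes c: "c \<in> cantor_set" "c \<noteq> 1"
  shows "\<phi> (c - 1) = 0"
  using cantor_refinable.vanishes_plus_one[OF reflect cantor_set_reflect[OF c(1)]] c(2) by simp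

lemma rescale_cantor:
  assumes c: "c \<in> cantor_set" and a: "a \<in> {0, 2}" "3 * c - a \<in> cantor_set"
  shows "\<phi> (3 * c - a) = \<phi> c"
proof -
  have eq: "\<phi> c = \<phi> (3 * c) + \<phi> (3 * c - 2)"
    using refinement_eq cantor_set_plus_int_in_R[OF c, of 0] by simp
  from a consider "a = 0" "3 * c \<in> cantor_set" | "a = 2" "3 * c - 2 \<in> cantor_set" by auto
  then show ?thesis
  proof cases
    case 1
    then show ?thesis using eq vanishes_far[OF 1(2), of "-2"] by simp
  next
    case 2
    then show ?thesis using eq vanishes_far[OF 2(2), of 2] by simp
  qed
qed

lemma eq_indicator_on_translates:
  assumes c: "c \<in> cantor_set" "c \<noteq> 0" "c \<noteq> 1"
  shows "\<phi> ((c + of_int m) / 3 ^ n) = \<phi> c * indicator cantor_set ((c + of_int m) / 3 ^ n)"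
proof (induction n arbitrary: m)
  case 0
  have "0 < c" "c < 1" using c cantor_set_subset by auto
  moreover have "0 \<le> c + of_int m \<and> c + of_int m \<le> 1" if "c + of_int m \<in> cantor_set"
    using that cantor_set_subset by auto
  ultimately have "c + of_int m \<in> cantor_set \<longleftrightarrow> m = 0" using c(1) by force
  moreover consider "m = 0" | "m = 1" | "m = -1" | "2 \<le> \<bar>m\<bar>" by linarith
  then have "m \<noteq> 0 \<Longrightarrow> \<phi> (c + of_int m) = 0"
    using vanishes_plus_one[OF c(1,2)] vanishes_minus_one[OF c(1,3)] vanishes_far[OF c(1)] by cases auto
  ultimately show ?case by (auto simp: indicator_def)
next
  case (Suc n)
  define x where "x = (c + of_int m) / 3 ^ Suc n"
  have "x \<in> cantor_R" unfolding x_def cantor_R_iff using c by blast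
  have x3: "3 * x = (c + of_int m) / 3 ^ n" "3 * x - 2 = (c + of_int (m - 2 * 3 ^ n)) / 3 ^ n"
    unfolding x_def by (simp_all add: field_simps)
  have "\<phi> x = \<phi> (3 * x) + \<phi> (3 * x - 2)" using refinement_eq[OF \<open>x \<in> cantor_R\<close>] .
  also have "\<dots> = \<phi> c * (indicator cantor_set (3 * x) + indicator cantor_set (3 * x - 2))"
    unfolding distrib_left x3(2) unfolding x3(1) Suc.IH ..
  also have "\<dots> = \<phi> c * indicator cantor_set x" by (simp flip: indicator_cantor_set_mult3)
  finally show ?case unfolding x_def .
qed

end

section \<open>Hausdorff-null sets\<close>

lemma INF_ennreal_eq_0_iff:
  "(INF i\<in>A. f i :: ennreal) = 0 \<longleftrightarrow> (\<forall>e>0. \<exists>i\<in>A. f i < ennreal e)"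
  unfolding bot_ennreal[symmetric] INF_eq_bot_iff
proof (intro iffI allI impI)
  fix x :: ennreal assume small: "\<forall>e>0. \<exists>i\<in>A. f i < ennreal e" and "bot < x"
  then obtain y where "0 < y" "y < x" using dense[of 0 x] by (auto simp: bot_ennreal)
  then obtain e where "y = ennreal e" "0 < e" by (cases y) (auto simp: top_unique)
  then show "\<exists>i\<in>A. f i < x" using small \<open>y < x\<close> by (meson order.strict_trans)
qed (simp add: bot_ennreal)

definition hausdorff_null :: "real \<Rightarrow> real set \<Rightarrow> bool" where
  "hausdorff_null s A \<longleftrightarrow> hausdorff_outer s A = 0"

definition delta_covers :: "real \<Rightarrow> real set \<Rightarrow> (nat \<Rightarrow> real set) set" where
  "delta_covers \<delta> A = {U. A \<subseteq> (\<Union>i. U i) \<and> (\<forall>i. bounded (U i) \<and> diameter (U i) \<le> \<delta>)}"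

lemma hausdorff_null_iff:
  "hausdorff_null s A \<longleftrightarrow>
     (\<forall>\<delta>>0. \<forall>\<epsilon>>0. \<exists>U\<in>delta_covers \<delta> A. (\<Sum>i. ennreal (diameter (U i) powr s)) < ennreal \<epsilon>)"
  unfolding hausdorff_null_def hausdorff_outer_def bot_ennreal[symmetric] SUP_bot_conv
  unfolding bot_ennreal hausdorff_pre_def delta_covers_def[symmetric] INF_ennreal_eq_0_iff
  by (simp add: Ball_def)

lemma hausdorff_null_subset:
  assumes "A \<subseteq> B" "hausdorff_null s B" shows "hausdorff_null s A"
proof -
  have "delta_covers \<delta> B \<subseteq> delta_covers \<delta> A" for \<delta>
    using assms(1) by (auto simp: delta_covers_def)
  then show ?thesis using assms(2) unfolding hausdorff_null_iff by blast
qed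

lemma hausdorff_null_UN:
  assumes null: "\<And>k::nat. hausdorff_null s (A k)"
  shows "hausdorff_null s (\<Union>k. A k)"
  unfolding hausdorff_null_iff
proof (intro allI impI)
  fix \<delta> \<epsilon> :: real assume \<delta>: "\<delta> > 0" and \<epsilon>: "\<epsilon> > 0"
  obtain U where U: "\<And>k. U k \<in> delta_covers \<delta> (A k)"
    "\<And>k. (\<Sum>i. ennreal (diameter (U k i) powr s)) < ennreal (\<epsilon> / 2 ^ (k + 2))"
  proof -
    have "\<forall>k. \<exists>U\<in>delta_covers \<delta> (A k). (\<Sum>i. ennreal (diameter (U i) powr s)) < ennreal (\<epsilon> / 2 ^ (k + 2))"
      using null \<delta> \<epsilon> unfolding hausdorff_null_iff by simp
    then show ?thesis using that by metis
  qed
  define V where "V j = U (fst (prod_decode j)) (snd (prod_decode j))" for j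
  have "V \<in> delta_covers \<delta> (\<Union>k. A k)"
  proof -
    have "x \<in> (\<Union>j. V j)" if x: "x \<in> A k" for x k
    proof -
      obtain i where "x \<in> U k i" using U(1)[of k] x unfolding delta_covers_def by blast
      then have "x \<in> V (prod_encode (k, i))" by (simp add: V_def)
      then show ?thesis by blast
    qed
    moreover have "bounded (V j) \<and> diameter (V j) \<le> \<delta>" for j
      using U(1)[of "fst (prod_decode j)"] unfolding delta_covers_def V_def by simp
    ultimately show ?thesis unfolding delta_covers_def by blast
  qed
  have "(\<Sum>j. ennreal (diameter (V j) powr s)) = (\<Sum>k. \<Sum>i. ennreal (diameter (U k i) powr s))"
    unfolding V_def by (rule suminf_ennreal_2dimen) (simp only: fst_conv snd_conv)
  also have "\<dots> \<le> (\<Sum>k. ennreal (\<epsilon> / 2 ^ (k + 2)))"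
    by (intro suminf_le) (use U(2) in \<open>auto intro: less_imp_le\<close>)
  also have "\<dots> = ennreal (\<epsilon> / 2)"
  proof -
    have "(\<lambda>k. (\<epsilon> / 4) * (1 / 2) ^ k) sums ((\<epsilon> / 4) * (1 / (1 - 1 / 2)))"
      by (intro sums_mult geometric_sums) auto
    then have "(\<lambda>k. \<epsilon> / 2 ^ (k + 2)) sums (\<epsilon> / 2)"
      by (simp add: power_add power_one_over field_simps)
    then show ?thesis using \<epsilon> by (simp add: suminf_ennreal2 sums_summable sums_unique[symmetric])
  qed
  also have "\<dots> < ennreal \<epsilon>" using \<epsilon> by (simp add: ennreal_lessI)
  finally show "\<exists>V\<in>delta_covers \<delta> (\<Union>k. A k). (\<Sum>i. ennreal (diameter (V i) powr s)) < ennreal \<epsilon>"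
    using \<open>V \<in> delta_covers \<delta> (\<Union>k. A k)\<close> by blast
qed

lemma hausdorff_null_singleton: "hausdorff_null s {x}"
  unfolding hausdorff_null_iff
proof (intro allI impI)
  fix \<delta> \<epsilon> :: real assume "\<delta> > 0" "\<epsilon> > 0"
  then have "(\<lambda>_. {x}) \<in> delta_covers \<delta> {x}" by (simp add: delta_covers_def)
  with \<open>\<epsilon> > 0\<close> show "\<exists>U\<in>delta_covers \<delta> {x}. (\<Sum>i. ennreal (diameter (U i) powr s)) < ennreal \<epsilon>"
    by (intro bexI[of _ "\<lambda>_. {x}"]) auto
qed

lemma hausdorff_null_countable_UN:
  assumes "countable I" "\<And>k. k \<in> I \<Longrightarrow> hausdorff_null s (A k)"
  shows "hausdorff_null s (\<Union>k\<in>I. A k)"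
proof (cases "I = {}")
  case True
  then show ?thesis using hausdorff_null_subset[OF _ hausdorff_null_singleton] by simp
next
  case False
  then have "(\<Union>k\<in>I. A k) = (\<Union>j. A (from_nat_into I j))"
    using range_from_nat_into[OF False assms(1)] by (metis image_image)
  then show ?thesis using assms False by (simp add: hausdorff_null_UN from_nat_into)
qed

lemma hausdorff_null_countable: "countable A \<Longrightarrow> hausdorff_null s A"
  using hausdorff_null_countable_UN[where I = A and A = "\<lambda>x. {x}"] hausdorff_null_singleton by simp

lemma hausdorff_null_Un:
  "hausdorff_null s A \<Longrightarrow> hausdorff_null s B \<Longrightarrow> hausdorff_null s (A \<union> B)"
  using hausdorff_null_countable_UN[where I = "{A, B}" and A = id and s = s] by auto

lemma hausdorff_null_nonexpanding_image:
  assumes f: "\<And>x y. dist (f x) (f y) \<le> dist x y" and s: "0 \<le> s" and null: "hausdorff_null s A"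
  shows "hausdorff_null s (f ` A)"
  unfolding hausdorff_null_iff
proof (intro allI impI)
  fix \<delta> \<epsilon> :: real assume "\<delta> > 0" "\<epsilon> > 0"
  then obtain U where U: "U \<in> delta_covers \<delta> A" "(\<Sum>i. ennreal (diameter (U i) powr s)) < ennreal \<epsilon>"
    using null unfolding hausdorff_null_iff by blast
  have image: "bounded (f ` U i) \<and> diameter (f ` U i) \<le> diameter (U i)" for i
  proof
    have bU: "bounded (U i)" using U(1) by (auto simp: delta_covers_def)
    then obtain a r where "\<And>y. y \<in> U i \<Longrightarrow> dist a y \<le> r" unfolding bounded_def by blast
    then show "bounded (f ` U i)" unfolding bounded_def using f order_trans by blast
    show "diameter (f ` U i) \<le> diameter (U i)"
    proof (rule diameter_le)
      show "f ` U i \<noteq> {} \<or> 0 \<le> diameter (U i)" by (simp add: diameter_ge_0 bU)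
      fix x y assume "x \<in> f ` U i" "y \<in> f ` U i"
      then obtain x' y' where "x' \<in> U i" "y' \<in> U i" "x = f x'" "y = f y'" by blast
      then show "norm (x - y) \<le> diameter (U i)"
        using f[of x' y'] diameter_bounded_bound[OF bU, of x' y'] by (simp add: dist_norm)
    qed
  qed
  then have "(\<lambda>i. f ` U i) \<in> delta_covers \<delta> (f ` A)"
    using U(1) unfolding delta_covers_def by (auto intro: order_trans) blast
  moreover have "(\<Sum>i. ennreal (diameter (f ` U i) powr s)) \<le> (\<Sum>i. ennreal (diameter (U i) powr s))"
    using image s by (intro suminf_le) (auto intro!: ennreal_leI powr_mono2 diameter_ge_0)
  ultimately show "\<exists>V\<in>delta_covers \<delta> (f ` A). (\<Sum>i. ennreal (diameter (V i) powr s)) < ennreal \<epsilon>"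
    using U(2) by (meson order.strict_trans1)
qed

section \<open>Dyadic intervals\<close>

definition dyadic_interval :: "nat \<Rightarrow> int \<Rightarrow> real set" where
  "dyadic_interval n k = {of_int k / 2 ^ n ..< (of_int k + 1) / 2 ^ n}"

lemma mem_dyadic_interval: "y \<in> dyadic_interval n k \<longleftrightarrow> \<lfloor>2 ^ n * y\<rfloor> = k"
  unfolding dyadic_interval_def by (auto simp: floor_eq_iff field_simps)

lemma dyadic_interval_in_borel [measurable]: "dyadic_interval n k \<in> sets borel"
  unfolding dyadic_interval_def by simp

lemma emeasure_dyadic_interval: "emeasure lborel (dyadic_interval n k) = ennreal (1 / 2 ^ n)"
proof -
  have "of_int k / 2 ^ n \<le> (of_int k + 1) / (2 ^ n :: real)" by (simp add: divide_right_mono)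
  then show ?thesis unfolding dyadic_interval_def by (simp add: diff_divide_distrib[symmetric])
qed

lemma floor_power2_mult:
  fixes y :: real assumes "m \<le> n"
  shows "\<lfloor>2 ^ m * y\<rfloor> = \<lfloor>2 ^ n * y\<rfloor> div 2 ^ (n - m)"
proof -
  have "(2::real) ^ n = 2 ^ m * 2 ^ (n - m)" using assms by (simp flip: power_add)
  then have "2 ^ m * y = 2 ^ n * y / real_of_int (2 ^ (n - m))" by simp
  then show ?thesis using floor_divide_real_eq_div[of "2 ^ (n - m)" "2 ^ n * y"] by simp
qed

lemma dyadic_interval_subset_ball:
  assumes "y \<in> dyadic_interval n k" shows "dyadic_interval n k \<subseteq> ball y (1 / 2 ^ n)"
  using assms unfolding dyadic_interval_def by (auto simp: dist_real_def field_simps abs_less_iff)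

definition maximal_dyadic_interval :: "nat \<Rightarrow> real set \<Rightarrow> nat \<Rightarrow> int \<Rightarrow> bool" where
  "maximal_dyadic_interval level G n k \<longleftrightarrow> level \<le> n \<and> dyadic_interval n k \<subseteq> G \<and>
     (\<forall>m. level \<le> m \<and> m < n \<longrightarrow> \<not> dyadic_interval m (k div 2 ^ (n - m)) \<subseteq> G)"

lemma maximal_dyadic_interval_exists:
  assumes "open G" "y \<in> G"
  obtains n k where "maximal_dyadic_interval level G n k" "y \<in> dyadic_interval n k"
proof -
  let ?P = "\<lambda>n. level \<le> n \<and> dyadic_interval n \<lfloor>2 ^ n * y\<rfloor> \<subseteq> G"
  obtain r where r: "r > 0" "ball y r \<subseteq> G" using assms open_contains_ball by blast
  obtain m where "(1 / 2) ^ m < r" using real_arch_pow_inv[OF \<open>r > 0\<close>, of "1 / 2"] by auto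
  moreover have "(1 / 2 :: real) ^ max level m \<le> (1 / 2) ^ m" by (simp add: power_decreasing)
  ultimately have "1 / 2 ^ max level m \<le> r" by (simp add: power_one_over)
  have "dyadic_interval (max level m) \<lfloor>2 ^ max level m * y\<rfloor> \<subseteq> ball y (1 / 2 ^ max level m)"
    by (rule dyadic_interval_subset_ball) (simp add: mem_dyadic_interval)
  also have "\<dots> \<subseteq> G" using \<open>1 / 2 ^ max level m \<le> r\<close> r(2) by (meson order_trans subset_ball)
  finally have "?P (max level m)" by simp
  define n where "n = (LEAST n. ?P n)"
  have "maximal_dyadic_interval level G n \<lfloor>2 ^ n * y\<rfloor>"
    unfolding maximal_dyadic_interval_def
  proof (intro conjI allI impI)
    show "level \<le> n" "dyadic_interval n \<lfloor>2 ^ n * y\<rfloor> \<subseteq> G"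
      using LeastI[of ?P, OF \<open>?P (max level m)\<close>] unfolding n_def by auto
    fix m assume m: "level \<le> m \<and> m < n"
    then have "\<not> dyadic_interval m \<lfloor>2 ^ m * y\<rfloor> \<subseteq> G"
      using not_less_Least[of m ?P] unfolding n_def by blast
    then show "\<not> dyadic_interval m (\<lfloor>2 ^ n * y\<rfloor> div 2 ^ (n - m)) \<subseteq> G"
      using floor_power2_mult[of m n y] m by simp
  qed
  then show ?thesis using that by (simp add: mem_dyadic_interval)
qed

lemma maximal_dyadic_intervals_disjoint:
  assumes "maximal_dyadic_interval level G n k" "maximal_dyadic_interval level G n' k'"
    and "(n, k) \<noteq> (n', k')"
  shows "dyadic_interval n k \<inter> dyadic_interval n' k' = {}"
proof -
  have "dyadic_interval n k \<inter> dyadic_interval n' k' = {}"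
    if "maximal_dyadic_interval level G n k" "maximal_dyadic_interval level G n' k'"
      "n' \<le> n" "(n, k) \<noteq> (n', k')" for n k n' k'
  proof (rule ccontr)
    assume "dyadic_interval n k \<inter> dyadic_interval n' k' \<noteq> {}"
    then obtain y where "y \<in> dyadic_interval n k" "y \<in> dyadic_interval n' k'" by blast
    then have "k' = k div 2 ^ (n - n')" using floor_power2_mult[OF \<open>n' \<le> n\<close>, of y]
      by (simp add: mem_dyadic_interval)
    with that show False unfolding maximal_dyadic_interval_def by (cases "n' < n") auto
  qed
  from this[of n k n' k'] this[of n' k' n k] assms show ?thesis by (cases "n' \<le> n") auto
qed

lemma open_dyadic_decomposition:
  assumes "open G"
  obtains V :: "nat \<Rightarrow> real set" where "disjoint_family V" "(\<Union>i. V i) = G"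
    "\<And>i. V i = {} \<or> (\<exists>n\<ge>level. \<exists>k. V i = dyadic_interval n k)"
proof -
  define f where "f = from_nat_into (UNIV :: (nat \<times> int) set)"
  have "bij f" unfolding f_def
    by (rule bij_betw_from_nat_into) (auto simp: infinite_UNIV_char_0 finite_prod)
  define V where "V i = (if maximal_dyadic_interval level G (fst (f i)) (snd (f i))
    then dyadic_interval (fst (f i)) (snd (f i)) else {})" for i
  show ?thesis
  proof
    show "disjoint_family V"
      unfolding disjoint_family_on_def
    proof (intro ballI impI)
      fix i j :: nat assume "i \<noteq> j"
      then have "f i \<noteq> f j" using \<open>bij f\<close> by (metis bij_pointE)
      then show "V i \<inter> V j = {}"
        unfolding V_def using maximal_dyadic_intervals_disjoint by (auto simp: prod_eq_iff)
    qed
    have "y \<in> (\<Union>i. V i)" if y: "y \<in> G" for y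
    proof -
      obtain n k where "maximal_dyadic_interval level G n k" "y \<in> dyadic_interval n k"
        using maximal_dyadic_interval_exists[OF \<open>open G\<close> y] .
      moreover obtain i where "f i = (n, k)" using \<open>bij f\<close> by (metis bij_pointE)
      ultimately have "y \<in> V i" by (simp add: V_def)
      then show ?thesis by blast
    qed
    then show "(\<Union>i. V i) = G" by (auto simp: V_def maximal_dyadic_interval_def split: if_splits)
    show "V i = {} \<or> (\<exists>n\<ge>level. \<exists>k. V i = dyadic_interval n k)" for i
      by (auto simp: V_def maximal_dyadic_interval_def)
  qed
qed

lemma dyadic_interval_Int:
  assumes "m \<le> n"
  shows "dyadic_interval n k \<subseteq> dyadic_interval m j \<or> dyadic_interval m j \<inter> dyadic_interval n k = {}"
proof (rule disjCI)
  assume "dyadic_interval m j \<inter> dyadic_interval n k \<noteq> {}"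
  then obtain y :: real where "y \<in> dyadic_interval m j" "y \<in> dyadic_interval n k" by blast
  then have "\<lfloor>2 ^ m * y\<rfloor> = j" "\<lfloor>2 ^ n * y\<rfloor> = k" by (simp_all add: mem_dyadic_interval)
  then have "j = k div 2 ^ (n - m)" using floor_power2_mult[OF assms] by simp
  then show "dyadic_interval n k \<subseteq> dyadic_interval m j"
    using floor_power2_mult[OF assms] by (auto simp: mem_dyadic_interval)
qed

lemma sets_borel_dyadic_intervals:
  "sets borel = sigma_sets UNIV (insert {} (range (case_prod dyadic_interval)))"
  unfolding sets_borel
proof (rule sigma_sets_eqI)
  fix S :: "real set" assume "S \<in> {S. open S}"
  then obtain V :: "nat \<Rightarrow> real set" where V: "(\<Union>i. V i) = S"
    "\<And>i. V i = {} \<or> (\<exists>n\<ge>0. \<exists>k. V i = dyadic_interval n k)"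
    using open_dyadic_decomposition[of S 0] by auto
  have "V i \<in> insert {} (range (case_prod dyadic_interval))" for i
    using V(2)[of i] rangeI[of "case_prod dyadic_interval"] by auto
  then have "V i \<in> sigma_sets UNIV (insert {} (range (case_prod dyadic_interval)))" for i
    by (rule sigma_sets.Basic)
  then show "S \<in> sigma_sets UNIV (insert {} (range (case_prod dyadic_interval)))"
    using sigma_sets.Union[of V] V(1) by auto
next
  fix D assume "D \<in> insert {} (range (case_prod dyadic_interval))"
  then have "D \<in> sets borel" by auto
  then show "D \<in> sigma_sets UNIV {S :: real set. open S}" by (simp add: sets_borel)
qed

section \<open>Ergodicity of the doubling map\<close>

lemma emeasure_doubling_invariant_dyadic_interval:
  fixes A :: "real set"
  assumes A: "A \<in> sets borel"
    and double: "\<And>y. y \<in> A \<longleftrightarrow> 2 * y \<in> A" and shift: "\<And>y. y \<in> A \<longleftrightarrow> y + 1 \<in> A"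
  shows "emeasure lborel (A \<inter> dyadic_interval n k) = emeasure lborel (A \<inter> {0..<1}) * ennreal (1 / 2 ^ n)"
proof -
  have double_pow: "y \<in> A \<longleftrightarrow> 2 ^ n * y \<in> A" for y
  proof (induction n arbitrary: y)
    case (Suc n)
    have "2 ^ Suc n * y = 2 ^ n * (2 * y)" by simp
    then show ?case using double[of y] Suc.IH[of "2 * y"] by (simp only:)
  qed simp
  have shift_nat: "y \<in> A \<longleftrightarrow> y + of_nat m \<in> A" for y m
  proof (induction m arbitrary: y)
    case (Suc m)
    have "y + of_nat (Suc m) = (y + 1) + of_nat m" by simp
    then show ?case using shift[of y] Suc.IH[of "y + 1"] by (simp only:)
  qed simp
  have shift_int: "y \<in> A \<longleftrightarrow> y + of_int j \<in> A" for y j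
  proof (cases "j \<ge> 0")
    case True
    then show ?thesis using shift_nat[of y "nat j"] by simp
  next
    case False
    then show ?thesis using shift_nat[of "y + of_int j" "nat (- j)"] by simp
  qed
  have ind: "indicator (A \<inter> {0..<1}) (- of_int k + 2 ^ n * x) = (indicator (A \<inter> dyadic_interval n k) x :: ennreal)" for x
  proof -
    have "x \<in> A \<longleftrightarrow> - of_int k + 2 ^ n * x \<in> A"
      using double_pow[of x] shift_int[of "2 ^ n * x" "- k"] by simp
    moreover have "x \<in> dyadic_interval n k \<longleftrightarrow> - of_int k + 2 ^ n * x \<in> {0..<1}"
      unfolding dyadic_interval_def by (auto simp: field_simps)
    ultimately show ?thesis by (simp add: indicator_def)
  qed
  have "emeasure lborel (A \<inter> {0..<1}) = (\<integral>\<^sup>+x. indicator (A \<inter> {0..<1}) x \<partial>lborel)"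
    using A by simp
  also have "\<dots> = ennreal (2 ^ n) * (\<integral>\<^sup>+x. indicator (A \<inter> {0..<1}) (- of_int k + 2 ^ n * x) \<partial>lborel)"
    using nn_integral_real_affine[of "indicator (A \<inter> {0..<1})" "2 ^ n" "- of_int k"] A by simp
  also have "\<dots> = ennreal (2 ^ n) * emeasure lborel (A \<inter> dyadic_interval n k)"
    unfolding ind using A by simp
  finally have "emeasure lborel (A \<inter> {0..<1}) * ennreal (1 / 2 ^ n)
      = ennreal (1 / 2 ^ n) * ennreal (2 ^ n) * emeasure lborel (A \<inter> dyadic_interval n k)"
    by (simp add: mult.commute mult.left_commute)
  also have "ennreal (1 / 2 ^ n) * ennreal (2 ^ n) = 1" by (simp flip: ennreal_mult)
  finally show ?thesis by simp
qed

lemma Int_stable_dyadic_intervals: "Int_stable (insert {} (range (case_prod dyadic_interval)))"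
proof (rule Int_stableI)
  let ?E = "insert {} (range (case_prod dyadic_interval))"
  have le: "dyadic_interval m j \<inter> dyadic_interval n k \<in> ?E" if "m \<le> n" for m j n k
    using dyadic_interval_Int[OF that, of k j] rangeI[of "case_prod dyadic_interval" "(n, k)"]
    by (auto simp: Int_absorb1)
  fix D D' assume "D \<in> ?E" "D' \<in> ?E"
  then consider "D = {} \<or> D' = {}" | m j n k where "D = dyadic_interval m j" "D' = dyadic_interval n k"
    by auto
  then show "D \<inter> D' \<in> ?E"
  proof cases
    case (2 m j n k)
    then show ?thesis using le[of m n j k] le[of n m k j] by (cases "m \<le> n") (auto simp: Int_commute)
  qed auto
qed

lemma UN_dyadic_interval_0: "(\<Union>k. dyadic_interval 0 k) = UNIV"
  by (auto simp: mem_dyadic_interval)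

text \<open>With \<open>a = \<lambda>(A \<inter> [0,1))\<close>, the measures \<open>\<lambda>(A \<inter> [0,1) \<inter> \<cdot>)\<close> and
  \<open>a \<lambda>([0,1) \<inter> \<cdot>)\<close> agree on dyadic intervals, hence on \<open>A\<close>, which gives \<open>a = a\<^sup>2\<close>.\<close>
lemma doubling_invariant_null_or_full:
  fixes A :: "real set"
  assumes A: "A \<in> sets borel"
    and double: "\<And>y. y \<in> A \<longleftrightarrow> 2 * y \<in> A" and shift: "\<And>y. y \<in> A \<longleftrightarrow> y + 1 \<in> A"
  shows "emeasure lborel (A \<inter> {0..<1}) \<in> {0, 1}"
proof -
  define I :: "real set" where "I = {0..<1}"
  define a where "a = emeasure lborel (A \<inter> I)"
  have I_eq: "I = dyadic_interval 0 0" by (simp add: I_def dyadic_interval_def)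
  have "a \<le> emeasure lborel I" unfolding a_def by (rule emeasure_mono) (auto simp: I_def)
  then obtain r where r: "a = ennreal r" "0 \<le> r" by (cases a) (auto simp: I_def top_unique)
  define M1 where "M1 = density lborel (indicator (A \<inter> I))"
  define M2 where "M2 = density lborel (\<lambda>x. a * indicator I x)"
  have M1: "emeasure M1 X = emeasure lborel (A \<inter> I \<inter> X)" if "X \<in> sets borel" for X
  proof -
    have "emeasure M1 X = (\<integral>\<^sup>+x. indicator (A \<inter> I \<inter> X) x \<partial>lborel)"
      unfolding M1_def using A that by (simp add: emeasure_density I_def indicator_inter_arith)
    then show ?thesis using A that by (simp add: I_def)
  qed
  have M2: "emeasure M2 X = a * emeasure lborel (I \<inter> X)" if "X \<in> sets borel" for X
  proof -
    have "emeasure M2 X = (\<integral>\<^sup>+x. a * indicator (I \<inter> X) x \<partial>lborel)"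
      unfolding M2_def using that by (simp add: emeasure_density I_def indicator_inter_arith mult.assoc)
    then show ?thesis using that by (simp add: nn_integral_cmult I_def)
  qed
  have agree: "emeasure M1 D = emeasure M2 D" if D_range: "D \<in> range (case_prod dyadic_interval)" for D
  proof -
    obtain n k where D: "D = dyadic_interval n k" using D_range by auto
    from dyadic_interval_Int[of 0 n k 0] consider "D \<subseteq> I" | "I \<inter> D = {}" unfolding D I_eq by auto
    then show ?thesis
    proof cases
      case 1
      then have "A \<inter> I \<inter> D = A \<inter> D" "I \<inter> D = D" by auto
      then show ?thesis
        using emeasure_doubling_invariant_dyadic_interval[OF A double shift, of n k]
        by (simp add: M1 M2 D emeasure_dyadic_interval a_def I_def mult.commute)
    next
      case 2
      then have "A \<inter> I \<inter> D = {}" by auto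
      with 2 show ?thesis by (simp add: M1 M2 D)
    qed
  qed
  have "M1 = M2"
  proof (rule measure_eqI_generator_eq_countable[OF Int_stable_dyadic_intervals _ _ _ _ _ UN_dyadic_interval_0])
    show "sets M1 = sigma_sets UNIV (insert {} (range (case_prod dyadic_interval)))"
      "sets M2 = sigma_sets UNIV (insert {} (range (case_prod dyadic_interval)))"
      by (simp_all add: M1_def M2_def sets_borel_dyadic_intervals)
    show "emeasure M1 D = emeasure M2 D" if "D \<in> insert {} (range (case_prod dyadic_interval))" for D
      using that agree by (auto simp: emeasure_density M1_def M2_def)
    show "range (dyadic_interval 0) \<subseteq> insert {} (range (case_prod dyadic_interval))" by auto
    show "emeasure M1 D \<noteq> \<infinity>" if "D \<in> range (dyadic_interval 0)" for D
    proof -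
      have "emeasure M1 D \<le> emeasure lborel I"
        using that by (auto simp: M1 intro!: emeasure_mono) (simp add: I_def)
      then show ?thesis by (auto simp: I_def top_unique)
    qed
  qed auto
  then have "a = a * a" using M1[OF A] M2[OF A] unfolding a_def by (simp add: Int_commute Int_assoc)
  then have "r = r * r" using r by (simp flip: ennreal_mult)
  then have "r = 0 \<or> r = 1" by auto
  then show ?thesis using r unfolding a_def I_def by auto
qed

lemma AE_const_of_zero_one_law:
  fixes g :: "'a \<Rightarrow> 'b::{metric_space, second_countable_topology}"
  assumes g: "g \<in> borel_measurable M" and I: "I \<in> sets M" "emeasure M I = 1"
    and zero_one: "\<And>B. B \<in> sets borel \<Longrightarrow> emeasure M (g -` B \<inter> I) \<in> {0, 1}"
  shows "\<exists>c. {x \<in> I. g x \<noteq> c} \<in> null_sets M"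
proof -
  obtain Q :: "'b set" where "countable Q" and Q: "\<And>X. open X \<Longrightarrow> X \<noteq> {} \<Longrightarrow> \<exists>q\<in>Q. q \<in> X"
    using countable_dense_exists by blast
  have preimage: "g -` B \<inter> I \<in> sets M" if "B \<in> sets borel" for B
  proof -
    have "g -` B \<inter> I = (g -` B \<inter> space M) \<inter> I" using sets.sets_into_space[OF I(1)] by auto
    then show ?thesis using measurable_sets[OF g that] I(1) by auto
  qed
  define S where "S q m = g -` ball q (inverse (real (Suc m))) \<inter> I" for q m
  have S_sets: "S q m \<in> sets M" for q m
    unfolding S_def by (rule preimage) simp
  have "\<exists>q\<in>Q. emeasure M (S q m) = 1" for m
  proof (rule ccontr)
    assume "\<not> (\<exists>q\<in>Q. emeasure M (S q m) = 1)"
    then have "S q m \<in> null_sets M" if "q \<in> Q" for q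
      using zero_one[of "ball q (inverse (real (Suc m)))"] that S_sets by (auto simp: S_def)
    then have "(\<Union>q\<in>Q. S q m) \<in> null_sets M" by (rule null_sets_UN'[OF \<open>countable Q\<close>])
    moreover have "I \<subseteq> (\<Union>q\<in>Q. S q m)"
    proof
      fix x assume "x \<in> I"
      obtain q where "q \<in> Q" "q \<in> ball (g x) (inverse (real (Suc m)))"
        using Q[of "ball (g x) (inverse (real (Suc m)))"] by auto
      with \<open>x \<in> I\<close> show "x \<in> (\<Union>q\<in>Q. S q m)" by (auto simp: S_def dist_commute)
    qed
    ultimately have "I \<in> null_sets M" using null_sets_subset I(1) by blast
    then show False using I(2) by auto
  qed
  then obtain q where q: "\<And>m. emeasure M (S (q m) m) = 1" by metis
  define Bad where "Bad = (\<Union>m. I - S (q m) m)"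
  have "I - S (q m) m \<in> null_sets M" for m
  proof -
    have "S (q m) m \<subseteq> I" by (auto simp: S_def)
    then have "emeasure M (I - S (q m) m) = 0"
      using emeasure_Diff[OF _ I(1) S_sets] q[of m] I(2) by simp
    then show ?thesis using I(1) S_sets by blast
  qed
  then have "Bad \<in> null_sets M" unfolding Bad_def by (rule null_sets_UN)
  have "\<not> I \<subseteq> Bad"
  proof
    assume "I \<subseteq> Bad"
    then have "I \<in> null_sets M" using null_sets_subset \<open>Bad \<in> null_sets M\<close> I(1) by blast
    then show False using I(2) by (simp add: null_sets_def)
  qed
  then obtain x0 where x0: "x0 \<in> I" "x0 \<notin> Bad" by blast
  have close: "dist (g x) (q m) < inverse (real (Suc m))" if "x \<in> I" "x \<notin> Bad" for x m
    using that by (auto simp: Bad_def S_def dist_commute)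
  have "{x \<in> I. g x \<noteq> g x0} \<subseteq> Bad"
  proof (rule subsetI, rule ccontr)
    fix x assume x: "x \<in> {x \<in> I. g x \<noteq> g x0}" "x \<notin> Bad"
    then obtain m where m: "inverse (real (Suc m)) < dist (g x) (g x0) / 2"
      using reals_Archimedean[of "dist (g x) (g x0) / 2"] x by auto
    have "dist (g x) (g x0) \<le> dist (g x) (q m) + dist (g x0) (q m)" by (rule dist_triangle2)
    also have "\<dots> < 2 * inverse (real (Suc m))"
      using close[of x m] close[OF x0, of m] x by simp
    finally show False using m by simp
  qed
  moreover have "{x \<in> I. g x \<noteq> g x0} = g -` (- {g x0}) \<inter> I" by auto
  then have "{x \<in> I. g x \<noteq> g x0} \<in> sets M" using preimage[of "- {g x0}"] by auto
  ultimately show ?thesis using null_sets_subset[OF \<open>Bad \<in> null_sets M\<close>] by blast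
qed

section \<open>From binary to ternary digits\<close>

definition binary_digit :: "real \<Rightarrow> nat \<Rightarrow> int" where
  "binary_digit y i = \<lfloor>2 ^ Suc i * y\<rfloor> mod 2"

text \<open>A right inverse of the Cantor function on \<open>[0,1)\<close>, extended with period 1.\<close>
definition cantor_map :: "real \<Rightarrow> real" where
  "cantor_map y = ternary_value (\<lambda>i. 2 * of_int (binary_digit y i))"

lemma binary_digit_cases: "binary_digit y i = 0 \<or> binary_digit y i = 1"
  unfolding binary_digit_def by auto

lemma cantor_digits_binary_digit: "cantor_digits (\<lambda>i. 2 * of_int (binary_digit y i))"
  unfolding cantor_digits_def
proof
  fix i show "2 * real_of_int (binary_digit y i) \<in> {0, 2}" using binary_digit_cases[of y i] by auto
qed

lemma cantor_map_in_cantor_set: "cantor_map y \<in> cantor_set"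
  unfolding cantor_map_def by (rule ternary_value_in_cantor_set[OF cantor_digits_binary_digit])

lemma binary_digit_double: "binary_digit (2 * y) i = binary_digit y (Suc i)"
  unfolding binary_digit_def by (simp add: mult.assoc)

lemma binary_digit_plus_1: "binary_digit (y + 1) i = binary_digit y i"
proof -
  have "2 ^ Suc i * (y + 1) = 2 ^ Suc i * y + of_int (2 ^ Suc i)" by (simp add: algebra_simps)
  then have "\<lfloor>2 ^ Suc i * (y + 1)\<rfloor> = \<lfloor>2 ^ Suc i * y\<rfloor> + 2 ^ Suc i" by (metis floor_add_int)
  then show ?thesis unfolding binary_digit_def by simp
qed

lemma cantor_map_double: "3 * cantor_map y = 2 * of_int (binary_digit y 0) + cantor_map (2 * y)"
  unfolding cantor_map_def binary_digit_double
  by (rule ternary_value_Suc[OF cantor_digits_binary_digit])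

lemma cantor_map_plus_1: "cantor_map (y + 1) = cantor_map y"
  unfolding cantor_map_def binary_digit_plus_1 ..

lemma borel_measurable_cantor_map: "cantor_map \<in> borel_measurable borel"
proof -
  have "(\<lambda>y. 2 * of_int (binary_digit y i) / 3 ^ Suc i :: real) \<in> borel_measurable borel" for i
    unfolding binary_digit_def by measurable
  then show ?thesis unfolding cantor_map_def ternary_value_def by (rule borel_measurable_suminf)
qed

lemma binary_digit_dyadic_interval:
  assumes "y \<in> dyadic_interval n k" "z \<in> dyadic_interval n k" "i < n"
  shows "binary_digit y i = binary_digit z i"
proof -
  have "Suc i \<le> n" using assms(3) by simp
  then show ?thesis
    using assms(1,2) floor_power2_mult[of "Suc i" n] unfolding binary_digit_def mem_dyadic_interval by metis
qed

lemma cantor_map_dyadic_interval: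
  assumes "y \<in> dyadic_interval n k" "z \<in> dyadic_interval n k"
  shows "\<bar>cantor_map y - cantor_map z\<bar> \<le> 1 / 3 ^ n"
proof -
  let ?d = "\<lambda>y i. 2 * of_int (binary_digit y i) :: real"
  have "(\<Sum>i<n. ?d y i * 3 ^ (n - 1 - i)) = (\<Sum>i<n. ?d z i * 3 ^ (n - 1 - i))"
    using binary_digit_dyadic_interval[OF assms] by simp
  moreover have tail: "0 \<le> ternary_value (\<lambda>i. ?d x (i + n)) \<and> ternary_value (\<lambda>i. ?d x (i + n)) \<le> 1" for x
    using ternary_value_bounds cantor_digits_binary_digit by (simp add: cantor_digits_def)
  ultimately have "\<bar>3 ^ n * cantor_map y - 3 ^ n * cantor_map z\<bar> \<le> 1"
    unfolding cantor_map_def ternary_value_shift[OF cantor_digits_binary_digit] abs_le_iff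
    using tail[of y] tail[of z] by linarith
  then have "3 ^ n * \<bar>cantor_map y - cantor_map z\<bar> \<le> 1"
    by (simp add: abs_mult flip: right_diff_distrib)
  then show ?thesis by (simp add: field_simps)
qed

lemma diameter_cantor_map_dyadic_interval:
  "bounded (cantor_map ` dyadic_interval n k) \<and> diameter (cantor_map ` dyadic_interval n k) \<le> 1 / 3 ^ n"
proof
  show "bounded (cantor_map ` dyadic_interval n k)"
    by (rule bounded_subset[OF bounded_closed_interval[of 0 1]])
      (use cantor_map_in_cantor_set cantor_set_subset in auto)
  show "diameter (cantor_map ` dyadic_interval n k) \<le> 1 / 3 ^ n"
    by (rule diameter_le) (use cantor_map_dyadic_interval in \<open>auto simp: dist_norm\<close>)
qed

lemma powr_log_3_2: "(1 / 3 ^ n) powr log 3 2 = (1 / 2 ^ n :: real)"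
proof -
  have "((3::real) ^ n) powr log 3 2 = (3 powr real n) powr log 3 2" by (simp add: powr_realpow)
  also have "\<dots> = 3 powr (log 3 2 * real n)" by (simp add: powr_powr mult.commute)
  also have "\<dots> = (3 powr log 3 2) powr real n" by (rule powr_powr[symmetric])
  also have "\<dots> = 2 ^ n" by (simp add: powr_realpow)
  finally show ?thesis by (simp add: powr_divide)
qed

text \<open>Cover a null set by disjoint dyadic intervals of small total length; their images have
  diameters \<open>3^(-n)\<close> with \<open>(3^(-n))^(log 3 2) = 2^(-n)\<close>.\<close>
lemma hausdorff_null_cantor_map_image:
  assumes N: "N \<in> null_sets lborel"
  shows "hausdorff_null (log 3 2) (cantor_map ` N)"
  unfolding hausdorff_null_iff
proof (intro allI impI)
  fix \<delta> \<epsilon> :: real assume "\<delta> > 0" "\<epsilon> > 0"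
  obtain n0 where "(1 / 3) ^ n0 < \<delta>" using real_arch_pow_inv[OF \<open>\<delta> > 0\<close>, of "1 / 3"] by auto
  then have n0: "1 / 3 ^ n \<le> \<delta>" if "n0 \<le> n" for n
    using that power_decreasing[of n0 n "1 / 3 :: real"] by (simp add: power_one_over)
  have "N \<in> sets borel" using N by (simp add: null_sets_def)
  then obtain G where G: "open G" "N \<subseteq> G" "emeasure lborel (G - N) < ennreal \<epsilon>"
    using outer_regular_lborel[OF _ \<open>\<epsilon> > 0\<close>] by blast
  then have "emeasure lborel G < ennreal \<epsilon>" using emeasure_Diff_null_set[OF N] by simp
  obtain V :: "nat \<Rightarrow> real set" where V: "disjoint_family V" "(\<Union>i. V i) = G"
    "\<And>i. V i = {} \<or> (\<exists>n\<ge>n0. \<exists>k. V i = dyadic_interval n k)"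
    using open_dyadic_decomposition[OF \<open>open G\<close>, of n0] by blast
  have V_cover: "bounded (cantor_map ` V i) \<and> diameter (cantor_map ` V i) \<le> \<delta>
      \<and> ennreal (diameter (cantor_map ` V i) powr log 3 2) \<le> emeasure lborel (V i)" for i
    using V(3)[of i]
  proof (elim disjE exE conjE)
    fix n k assume "n0 \<le> n" "V i = dyadic_interval n k"
    moreover have "diameter (cantor_map ` dyadic_interval n k) powr log 3 2 \<le> (1 / 3 ^ n) powr log 3 2"
      using diameter_cantor_map_dyadic_interval by (intro powr_mono2) (auto simp: diameter_ge_0)
    ultimately show ?thesis
      using diameter_cantor_map_dyadic_interval[of n k] n0[of n]
      by (auto simp: powr_log_3_2 emeasure_dyadic_interval intro: ennreal_leI)
  qed (use \<open>\<delta> > 0\<close> in simp)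
  have cover: "(\<lambda>i. cantor_map ` V i) \<in> delta_covers \<delta> (cantor_map ` N)"
    using V(2) G(2) V_cover unfolding delta_covers_def by blast
  have "(\<Sum>i. ennreal (diameter (cantor_map ` V i) powr log 3 2)) \<le> (\<Sum>i. emeasure lborel (V i))"
    using V_cover by (intro suminf_le) auto
  also have "\<dots> = emeasure lborel G"
  proof -
    have "V i \<in> sets lborel" for i using V(3)[of i] by auto
    then show ?thesis using suminf_emeasure[OF _ V(1), of lborel] V(2) by auto
  qed
  also have "\<dots> < ennreal \<epsilon>" by fact
  finally show "\<exists>U\<in>delta_covers \<delta> (cantor_map ` N). (\<Sum>i. ennreal (diameter (U i) powr log 3 2)) < ennreal \<epsilon>"
    using cover by force
qed

definition binary_value :: "(nat \<Rightarrow> real) \<Rightarrow> real" where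
  "binary_value e = (\<Sum>i. e i / 2 ^ Suc i)"

text \<open>Expansions ending in 1s are excluded: \<open>binary_digit\<close> never produces them.\<close>
definition proper_binary_digits :: "(nat \<Rightarrow> real) \<Rightarrow> bool" where
  "proper_binary_digits e \<longleftrightarrow> (\<forall>i. e i \<in> {0, 1}) \<and> (\<forall>n. \<exists>i\<ge>n. e i = 0)"

lemma sums_one_div_power2: "(\<lambda>i. 1 / 2 ^ Suc i :: real) sums 1"
proof -
  have "(\<lambda>i. (1/2) * (1/2::real) ^ i) sums ((1/2) * (1 / (1 - 1/2)))"
    by (intro sums_mult geometric_sums) auto
  then show ?thesis by (simp add: power_one_over)
qed

lemma proper_binary_digits_Suc: "proper_binary_digits e \<Longrightarrow> proper_binary_digits (\<lambda>i. e (Suc i))"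
  unfolding proper_binary_digits_def by (metis Suc_le_D Suc_le_mono le_SucI)

lemma binary_value_sums:
  assumes "proper_binary_digits e" shows "(\<lambda>i. e i / 2 ^ Suc i) sums binary_value e"
proof -
  have "norm (e i / 2 ^ Suc i) \<le> 1 / 2 ^ Suc i" for i
    using assms unfolding proper_binary_digits_def by (cases "e i = 0") auto
  then show ?thesis unfolding binary_value_def
    by (intro summable_sums summable_comparison_test'[OF sums_summable[OF sums_one_div_power2]])
qed

lemma binary_value_Suc:
  assumes e: "proper_binary_digits e"
  shows "2 * binary_value e = e 0 + binary_value (\<lambda>i. e (Suc i))"
proof -
  have "(\<lambda>i. e (Suc i) / 2 ^ Suc i / 2) sums (binary_value e - e 0 / 2)"
    using sums_split_initial_segment[OF binary_value_sums[OF e], of 1] by simp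
  moreover have "(\<lambda>i. e (Suc i) / 2 ^ Suc i / 2) sums (binary_value (\<lambda>i. e (Suc i)) / 2)"
    by (intro sums_divide binary_value_sums proper_binary_digits_Suc e)
  ultimately show ?thesis using sums_unique2 by fastforce
qed

lemma binary_value_bounds:
  assumes e: "proper_binary_digits e" shows "0 \<le> binary_value e \<and> binary_value e < 1"
proof -
  have e01: "e i = 0 \<or> e i = 1" for i using e by (auto simp: proper_binary_digits_def)
  obtain j where "e j = 0" using e unfolding proper_binary_digits_def by blast
  have nonneg: "0 \<le> e i / 2 ^ Suc i" "0 \<le> (1 - e i) / 2 ^ Suc i" for i using e01[of i] by auto
  have "0 \<le> binary_value e" using sums_le[OF _ sums_zero binary_value_sums[OF e]] nonneg(1) by blast
  moreover
  have gap: "(\<lambda>i. (1 - e i) / 2 ^ Suc i) sums (1 - binary_value e)"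
    using sums_diff[OF sums_one_div_power2 binary_value_sums[OF e]] by (simp add: diff_divide_distrib)
  have "0 < 1 - binary_value e"
    unfolding sums_unique[OF gap]
    by (rule suminf_pos2[OF sums_summable[OF gap], of j]) (use nonneg(2) \<open>e j = 0\<close> in auto)
  ultimately show ?thesis by simp
qed

lemma binary_digit_binary_value:
  "proper_binary_digits e \<Longrightarrow> of_int (binary_digit (binary_value e) i) = e i"
proof (induction i arbitrary: e)
  case 0
  have "e 0 = 0 \<or> e 0 = 1" using "0.prems" by (auto simp: proper_binary_digits_def)
  then have "\<lfloor>2 * binary_value e\<rfloor> = e 0"
    using binary_value_Suc[OF "0.prems"] binary_value_bounds[OF proper_binary_digits_Suc[OF "0.prems"]]
    by (auto simp: floor_eq_iff)
  then show ?case using \<open>e 0 = 0 \<or> e 0 = 1\<close> by (auto simp: binary_digit_def)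
next
  case (Suc i)
  have "e 0 = 0 \<or> e 0 = 1" using Suc.prems by (auto simp: proper_binary_digits_def)
  then have "binary_digit (binary_value e) (Suc i) = binary_digit (binary_value (\<lambda>i. e (Suc i))) i"
    using binary_value_Suc[OF Suc.prems] binary_digit_plus_1[of "binary_value (\<lambda>i. e (Suc i))" i]
    by (auto simp flip: binary_digit_double simp: add.commute[of 1])
  then show ?case using Suc.IH[OF proper_binary_digits_Suc[OF Suc.prems]] by simp
qed

lemma cantor_map_onto:
  assumes c: "c \<in> cantor_set" and not_triadic: "c \<notin> range (\<lambda>(j::int, n::nat). of_int j / 3 ^ n)"
  obtains y where "y \<in> {0..<1}" "cantor_map y = c"
proof -
  obtain d where d: "cantor_digits d" "c = ternary_value d" using c by (auto simp: cantor_set_eq)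
  have "\<exists>i\<ge>n. d i = 0" for n
  proof (rule ccontr)
    assume "\<not> (\<exists>i\<ge>n. d i = 0)"
    then have "d (i + n) = 2" for i using d(1) le_add2[of n i] unfolding cantor_digits_def by blast
    then have "(\<lambda>i. d (i + n)) = (\<lambda>_. 2)" by blast
    moreover have "ternary_value (\<lambda>_. 2) = 1"
      using sums_two_div_power3 by (simp add: ternary_value_def sums_iff)
    moreover obtain j :: int where "3 ^ n * c = of_int j + ternary_value (\<lambda>i. d (i + n))"
      using ternary_value_shift_int[OF d(1)] d(2) by metis
    ultimately have "c = of_int (j + 1) / 3 ^ n" by (simp add: field_simps)
    then show False using not_triadic rangeI[of "\<lambda>(j::int, n::nat). of_int j / (3::real) ^ n" "(j + 1, n)"] by simp
  qed
  then have e: "proper_binary_digits (\<lambda>i. d i / 2)"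
    using d(1) by (auto simp: proper_binary_digits_def cantor_digits_def)
  have "(\<lambda>i. 2 * of_int (binary_digit (binary_value (\<lambda>i. d i / 2)) i)) = d"
    using binary_digit_binary_value[OF e] by (simp add: mult.commute)
  then have "cantor_map (binary_value (\<lambda>i. d i / 2)) = c" by (simp add: cantor_map_def d(2))
  with binary_value_bounds[OF e] that show ?thesis by simp
qed

section \<open>Almost everywhere constancy\<close>

context cantor_refinable
begin

lemma hausdorff_null_exceptional_set:
  assumes null: "hausdorff_null (log 3 2) {z \<in> cantor_set. \<phi> z \<noteq> w}"
  shows "hausdorff_null (log 3 2) {x \<in> cantor_R. \<phi> x \<noteq> w * indicator cantor_set x}"
proof -
  define E where "E = {z \<in> cantor_set. \<phi> z \<noteq> w} \<union> {0, 1}"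
  define f where "f p z = (z + of_int (snd p)) / 3 ^ fst p" for p :: "nat \<times> int" and z :: real
  have "hausdorff_null (log 3 2) E"
    unfolding E_def by (intro hausdorff_null_Un null hausdorff_null_countable) simp
  moreover have "dist (f p x) (f p y) \<le> dist x y" for p x y
  proof -
    have "dist (f p x) (f p y) = \<bar>x - y\<bar> / 3 ^ fst p"
      by (simp add: f_def dist_real_def flip: diff_divide_distrib)
    also have "\<dots> \<le> \<bar>x - y\<bar>"
      using mult_left_mono[of 1 "3 ^ fst p" "\<bar>x - y\<bar>"] by (simp add: divide_le_eq)
    finally show ?thesis by (simp add: dist_real_def)
  qed
  ultimately have "hausdorff_null (log 3 2) (\<Union>p. f p ` E)"
    by (intro hausdorff_null_countable_UN hausdorff_null_nonexpanding_image) auto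
  moreover have "{x \<in> cantor_R. \<phi> x \<noteq> w * indicator cantor_set x} \<subseteq> (\<Union>p. f p ` E)"
  proof
    fix x assume x: "x \<in> {x \<in> cantor_R. \<phi> x \<noteq> w * indicator cantor_set x}"
    then obtain n m z where z: "z \<in> cantor_set" "x = (z + of_int m) / 3 ^ n" by (auto simp: cantor_R_iff)
    then have "z \<in> E" using x eq_indicator_on_translates[of z m n] by (auto simp: E_def)
    then show "x \<in> (\<Union>p. f p ` E)" using z(2) by (auto simp: f_def intro!: UN_I[of "(n, m)"])
  qed
  ultimately show ?thesis by (rule hausdorff_null_subset[rotated])
qed

lemma phi_cantor_map_double: "\<phi> (cantor_map (2 * y)) = \<phi> (cantor_map y)"
proof -
  have "cantor_map (2 * y) = 3 * cantor_map y - 2 * of_int (binary_digit y 0)"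
    using cantor_map_double[of y] by simp
  then show ?thesis
    using rescale_cantor[OF cantor_map_in_cantor_set] cantor_map_in_cantor_set[of "2 * y"]
      binary_digit_cases[of y 0] by auto
qed

lemma ae_constant_on_cantor_set:
  assumes meas: "\<phi> \<in> borel_measurable (restrict_space borel cantor_R)"
  obtains w where "hausdorff_null (log 3 2) {z \<in> cantor_set. \<phi> z \<noteq> w}"
proof -
  define g where "g y = \<phi> (cantor_map y)" for y
  have "cantor_map \<in> measurable borel (restrict_space borel cantor_R)"
    using cantor_set_plus_int_in_R[OF cantor_map_in_cantor_set, of _ 0] borel_measurable_cantor_map
    by (intro measurable_restrict_space2) auto
  then have g_meas: "g \<in> borel_measurable borel"
    unfolding g_def using meas by (rule measurable_comp[unfolded comp_def])
  have zero_one: "emeasure lborel (g -` B \<inter> {0..<1}) \<in> {0, 1}" if "B \<in> sets borel" for B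
  proof (rule doubling_invariant_null_or_full)
    show "g -` B \<in> sets borel" using measurable_sets[OF g_meas that] by simp
    show "y \<in> g -` B \<longleftrightarrow> 2 * y \<in> g -` B" "y \<in> g -` B \<longleftrightarrow> y + 1 \<in> g -` B" for y
      by (simp_all add: g_def phi_cantor_map_double cantor_map_plus_1)
  qed
  have "g \<in> borel_measurable lborel" using g_meas by simp
  then obtain w where w: "{y \<in> {0..<1}. g y \<noteq> w} \<in> null_sets lborel"
    using AE_const_of_zero_one_law[of g lborel "{0..<1}"] zero_one by auto
  let ?triadic = "range (\<lambda>(j::int, n::nat). of_int j / 3 ^ n :: real)"
  have "{z \<in> cantor_set. \<phi> z \<noteq> w} \<subseteq> cantor_map ` {y \<in> {0..<1}. g y \<noteq> w} \<union> ?triadic"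
  proof
    fix z assume z: "z \<in> {z \<in> cantor_set. \<phi> z \<noteq> w}"
    show "z \<in> cantor_map ` {y \<in> {0..<1}. g y \<noteq> w} \<union> ?triadic"
    proof (cases "z \<in> ?triadic")
      case False
      with z obtain y where "y \<in> {0..<1}" "cantor_map y = z" using cantor_map_onto by blast
      with z show ?thesis by (auto simp: g_def)
    qed simp
  qed
  moreover have "hausdorff_null (log 3 2) (cantor_map ` {y \<in> {0..<1}. g y \<noteq> w} \<union> ?triadic)"
    by (intro hausdorff_null_Un hausdorff_null_cantor_map_image w hausdorff_null_countable) simp
  ultimately show ?thesis using that hausdorff_null_subset by blast
qed

end

theorem proposition3p4:
  fixes \<phi> :: "real \<Rightarrow> complex"
  assumes meas: "\<phi> \<in> borel_measurable (restrict_space borel cantor_R)"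
    and bdd: "bounded {x \<in> cantor_R. \<phi> x \<noteq> 0}"
    and feq: "\<And>x. x \<in> cantor_R \<Longrightarrow> \<phi> x = \<phi> (3 * x) + \<phi> (3 * x - 2)"
  shows "\<exists>c::complex. hausdorff_outer (log 3 2)
           {x \<in> cantor_R. \<phi> x \<noteq> c * indicator cantor_set x} = 0"
proof -
  interpret cantor_refinable \<phi> using feq bdd by unfold_locales
  obtain c where "hausdorff_null (log 3 2) {z \<in> cantor_set. \<phi> z \<noteq> c}"
    using ae_constant_on_cantor_set[OF meas] by blast
  then show ?thesis using hausdorff_null_exceptional_set unfolding hausdorff_null_def by blast
qed

end
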